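(* Let $\mu\in P$. (i) If $\omega\in P^+$ is minuscule, then $\mu_++w_\mu\omega\in P^+$. (iia) If $\mu_++w_\mu\alpha_0\notin P^+$, then $w_\mu\alpha_0=-\alpha_j$ for some $1\le j\le n$, and moreover $\langle\mu_+,\alpha_j^\vee\rangle=1$. (iib) If $\mu_++w_\mu\alpha_0\in P^+$ and $w_\mu\alpha_0\in R^-$, then $\langle\mu_+,(w_\mu\alpha_0)^\vee\rangle\le-2$.
   Context: Let $R$ be an irreducible reduced crystallographic root system of rank $n$ spanning a real Euclidean space $V$ with inner product $\langle\cdot,\cdot\rangle$; $\alpha^\vee:=2\alpha/\langle\alpha,\alpha\rangle$; $P$ the weight lattice; $R^+$ positive roots with simple roots $\alpha_1,\dots,\alpha_n$, $R^-:=-R^+$; $P^+$ the dominant weights; $\alpha_0\in R^+$ the root such that $\alpha_0^\vee$ is the highest root of $R^\vee$. A weight $\omega\in P^+$ is minuscule if $\omega\ne0$ and $\langle\omega,\alpha^\vee\rangle\in\{0,1\}$ for all $\alpha\in R^+$. $W_0$ is the finite Weyl group; for $\mu\in P$, $w_\mu$ is the shortest element of $W_0$ with $w_\mu\mu\in P^+$ and $\mu_+:=w_\mu\mu$. *)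

theory Defs
  imports "HOL-Analysis.Analysis"
begin

definition coroot :: "'a::euclidean_space \<Rightarrow> 'a" where
  "coroot \<alpha> = (2 / (\<alpha> \<bullet> \<alpha>)) *\<^sub>R \<alpha>"

definition refl :: "'a::euclidean_space \<Rightarrow> 'a \<Rightarrow> 'a" where
  "refl \<alpha> v = v - (v \<bullet> coroot \<alpha>) *\<^sub>R \<alpha>"

definition root_system :: "'a::euclidean_space set \<Rightarrow> bool" where
  "root_system R \<longleftrightarrow> finite R \<and> 0 \<notin> R \<and> span R = UNIV \<and>
     (\<forall>\<alpha>\<in>R. refl \<alpha> ` R = R)"

definition crystallographic :: "'a::euclidean_space set \<Rightarrow> bool" where
  "crystallographic R \<longleftrightarrow> (\<forall>\<alpha>\<in>R. \<forall>\<beta>\<in>R. \<beta> \<bullet> coroot \<alpha> \<in> \<int>)"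

definition reduced :: "'a::euclidean_space set \<Rightarrow> bool" where
  "reduced R \<longleftrightarrow> (\<forall>\<alpha>\<in>R. \<forall>c::real. c *\<^sub>R \<alpha> \<in> R \<longrightarrow> c = 1 \<or> c = -1)"

definition irreducible_rs :: "'a::euclidean_space set \<Rightarrow> bool" where
  "irreducible_rs R \<longleftrightarrow> R \<noteq> {} \<and> (\<forall>R1 R2. R1 \<union> R2 = R \<longrightarrow> R1 \<inter> R2 = {} \<longrightarrow>
      (\<forall>\<alpha>\<in>R1. \<forall>\<beta>\<in>R2. \<alpha> \<bullet> \<beta> = 0) \<longrightarrow> R1 = {} \<or> R2 = {})"

definition is_base :: "'a::euclidean_space set \<Rightarrow> 'a set \<Rightarrow> bool" where
  "is_base R S \<longleftrightarrow> S \<subseteq> R \<and> independent S \<and>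
     (\<forall>\<beta>\<in>R. \<exists>c::'a \<Rightarrow> int. \<beta> = (\<Sum>\<alpha>\<in>S. of_int (c \<alpha>) *\<^sub>R \<alpha>) \<and>
        ((\<forall>\<alpha>\<in>S. c \<alpha> \<ge> 0) \<or> (\<forall>\<alpha>\<in>S. c \<alpha> \<le> 0)))"

definition nonneg_int_comb :: "'a::euclidean_space set \<Rightarrow> 'a set" where
  "nonneg_int_comb S = {v. \<exists>c::'a \<Rightarrow> int. (\<forall>\<alpha>\<in>S. c \<alpha> \<ge> 0) \<and> v = (\<Sum>\<alpha>\<in>S. of_int (c \<alpha>) *\<^sub>R \<alpha>)}"

definition pos_roots :: "'a::euclidean_space set \<Rightarrow> 'a set \<Rightarrow> 'a set" where
  "pos_roots R S = R \<inter> nonneg_int_comb S"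

definition neg_roots :: "'a::euclidean_space set \<Rightarrow> 'a set \<Rightarrow> 'a set" where
  "neg_roots R S = uminus ` pos_roots R S"

definition weights :: "'a::euclidean_space set \<Rightarrow> 'a set" where
  "weights R = {x. \<forall>\<alpha>\<in>R. x \<bullet> coroot \<alpha> \<in> \<int>}"

definition dominant :: "'a::euclidean_space set \<Rightarrow> 'a set \<Rightarrow> 'a set" where
  "dominant R S = {x\<in>weights R. \<forall>\<alpha>\<in>pos_roots R S. x \<bullet> coroot \<alpha> \<ge> 0}"

definition minuscule :: "'a::euclidean_space set \<Rightarrow> 'a set \<Rightarrow> 'a \<Rightarrow> bool" where
  "minuscule R S \<omega> \<longleftrightarrow> \<omega> \<in> dominant R S \<and> \<omega> \<noteq> 0 \<and>
     (\<forall>\<alpha>\<in>pos_roots R S. \<omega> \<bullet> coroot \<alpha> \<in> {0, 1})"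

text \<open>alpha0: the positive root whose coroot is the highest root of the dual root system
  R^vee (with respect to the base S^vee).\<close>
definition is_alpha0 :: "'a::euclidean_space set \<Rightarrow> 'a set \<Rightarrow> 'a \<Rightarrow> bool" where
  "is_alpha0 R S \<alpha>0 \<longleftrightarrow> \<alpha>0 \<in> pos_roots R S \<and>
     (\<forall>\<beta>\<in>R. coroot \<alpha>0 - coroot \<beta> \<in> nonneg_int_comb (coroot ` S))"

inductive_set weyl :: "'a::euclidean_space set \<Rightarrow> ('a \<Rightarrow> 'a) set" for R where
  weyl_id: "id \<in> weyl R"
| weyl_step: "w \<in> weyl R \<Longrightarrow> \<alpha> \<in> R \<Longrightarrow> refl \<alpha> \<circ> w \<in> weyl R"

definition refl_word :: "'a::euclidean_space list \<Rightarrow> 'a \<Rightarrow> 'a" where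
  "refl_word as = foldr (\<lambda>\<alpha> f. refl \<alpha> \<circ> f) as id"

definition weyl_length :: "'a::euclidean_space set \<Rightarrow> ('a \<Rightarrow> 'a) \<Rightarrow> nat" where
  "weyl_length S w = (LEAST k. \<exists>as. set as \<subseteq> S \<and> length as = k \<and> w = refl_word as)"

text \<open>w is w_mu: a shortest element of W_0 mapping mu into P^+ (it is unique).\<close>
definition is_w_mu :: "'a::euclidean_space set \<Rightarrow> 'a set \<Rightarrow> 'a \<Rightarrow> ('a \<Rightarrow> 'a) \<Rightarrow> bool" where
  "is_w_mu R S \<mu> w \<longleftrightarrow> w \<in> weyl R \<and> w \<mu> \<in> dominant R S \<and>
     (\<forall>v\<in>weyl R. v \<mu> \<in> dominant R S \<longrightarrow> weyl_length S w \<le> weyl_length S v)"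

end

theory Submission
  imports Defs
begin

text \<open>Let w be the shortest Weyl group element with w \<mu> dominant. A simple root a orthogonal
  to w \<mu> is not inverted by w, for otherwise the exchange property shortens refl a \<circ> w, which
  still sends \<mu> to w \<mu>; expanding a positive root orthogonal to w \<mu> in simple roots shows the
  same for it. Hence w \<mu> pairs to at least 1 with every positive root \<beta> whose preimage
  under w is negative. Since the pairing of w \<lambda> with \<beta> is that of \<lambda> with the preimage,
  a minuscule \<omega> contributes at least -1 there, which gives (i). In (iia) a negative pairing
  of w \<mu> + w \<alpha>0 with \<beta> makes \<alpha>0 pair to at least 2 with minus the preimage, and as the
  coroot of \<alpha>0 is the highest coroot this root must be \<alpha>0 itself; dominance can be tested
  on simple roots, so \<beta> may be taken simple. Part (iib) only uses that a root pairs to 2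
  with its own coroot.\<close>

lemma independent_coefficients_eq:
  fixes S :: "'a::euclidean_space set"
  assumes "independent S" "(\<Sum>b\<in>S. f b *\<^sub>R b) = (\<Sum>b\<in>S. g b *\<^sub>R b)" "a \<in> S"
  shows "f a = g a"
proof -
  have "(\<Sum>b\<in>S. (f b - g b) *\<^sub>R b) = 0"
    using assms(2) by (simp add: scaleR_diff_left sum_subtractf)
  then show ?thesis using assms(1,3) unfolding independent_explicit by auto
qed

lemma sum_delta_scaleR:
  fixes S :: "'a::real_vector set"
  assumes "finite S" "a \<in> S"
  shows "(\<Sum>b\<in>S. of_int (if b = a then k else 0) *\<^sub>R b) = of_int k *\<^sub>R a"
proof -
  have "(\<Sum>b\<in>S. of_int (if b = a then k else 0) *\<^sub>R b) = (\<Sum>b\<in>S. if b = a then of_int k *\<^sub>R b else 0)"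
    by (rule sum.cong) auto
  then show ?thesis using assms by (simp add: sum.delta)
qed

lemma Ints_less_imp_add_one_le:
  fixes x y :: real
  assumes "x \<in> \<int>" "y \<in> \<int>" "x < y"
  shows "x + 1 \<le> y"
proof -
  obtain m n :: int where "x = of_int m" "y = of_int n" using assms(1,2) by (auto elim!: Ints_cases)
  then show ?thesis using assms(3) by simp
qed

subsection \<open>Coroots and reflections\<close>

lemma inner_coroot: "y \<bullet> coroot x = (2 / (x \<bullet> x)) * (y \<bullet> x)"
  by (simp add: coroot_def)

lemma coroot_uminus [simp]: "coroot (- x) = - coroot x"
  by (simp add: coroot_def)

lemma inner_coroot_self: "x \<noteq> 0 \<Longrightarrow> x \<bullet> coroot x = 2"
  by (simp add: coroot_def)

lemma coroot_coroot: "x \<noteq> 0 \<Longrightarrow> coroot (coroot x) = x"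
  by (simp add: coroot_def field_simps)

lemma coroot_inject: "x \<noteq> 0 \<Longrightarrow> y \<noteq> 0 \<Longrightarrow> coroot x = coroot y \<Longrightarrow> x = y"
  by (metis coroot_coroot)

lemma
  assumes "x \<noteq> 0"
  shows inner_coroot_nonneg_iff: "y \<bullet> coroot x \<ge> 0 \<longleftrightarrow> y \<bullet> x \<ge> 0"
    and inner_coroot_pos_iff: "y \<bullet> coroot x > 0 \<longleftrightarrow> y \<bullet> x > 0"
    and inner_coroot_eq_0_iff: "y \<bullet> coroot x = 0 \<longleftrightarrow> y \<bullet> x = 0"
proof -
  have c: "2 / (x \<bullet> x) > 0" using assms by simp
  show "y \<bullet> coroot x \<ge> 0 \<longleftrightarrow> y \<bullet> x \<ge> 0" "y \<bullet> coroot x > 0 \<longleftrightarrow> y \<bullet> x > 0"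
    "y \<bullet> coroot x = 0 \<longleftrightarrow> y \<bullet> x = 0"
    unfolding inner_coroot
    using mult_le_cancel_left_pos[OF c, of 0] mult_less_cancel_left_pos[OF c, of 0] c by auto
qed

lemma refl_refl [simp]: "refl a (refl a v) = v"
proof (cases "a = 0")
  case False
  then show ?thesis by (simp add: refl_def inner_diff_left inner_coroot_self algebra_simps)
qed (simp add: refl_def coroot_def)

lemma refl_self: "a \<noteq> 0 \<Longrightarrow> refl a a = - a"
  by (simp add: refl_def inner_coroot_self scaleR_2)

lemma refl_uminus [simp]: "refl (- a) = refl a"
  by (auto simp: refl_def)

lemma orthogonal_transformation_refl: "orthogonal_transformation (refl a)"
proof -
  have "linear (refl a)"
    by (rule linearI) (auto simp: refl_def inner_add_left algebra_simps)
  moreover have "refl a v \<bullet> refl a u = v \<bullet> u" for v u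
  proof (cases "a = 0")
    case False
    have "refl a v \<bullet> refl a u = v \<bullet> u - (u \<bullet> coroot a) * (v \<bullet> a) - (v \<bullet> coroot a) * (a \<bullet> u)
       + (v \<bullet> coroot a) * (u \<bullet> coroot a) * (a \<bullet> a)"
      by (simp add: refl_def inner_diff_left inner_diff_right algebra_simps)
    also have "\<dots> = v \<bullet> u" using False
      by (simp add: inner_coroot inner_commute field_simps)
    finally show ?thesis .
  qed (simp add: refl_def coroot_def)
  ultimately show ?thesis by (simp add: orthogonal_transformation_def)
qed

lemma coroot_orthogonal_transformation:
  "orthogonal_transformation f \<Longrightarrow> coroot (f x) = f (coroot x)"
  by (simp add: coroot_def orthogonal_transformation_scaleR orthogonal_transformation_def)

lemma inner_coroot_orthogonal_transformation:
  "orthogonal_transformation f \<Longrightarrow> f y \<bullet> coroot (f x) = y \<bullet> coroot x"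
  by (simp add: coroot_orthogonal_transformation orthogonal_transformation_def)

lemma refl_uminus_arg: "refl a (- v) = - refl a v"
  by (simp add: refl_def)

lemma refl_refl_conj: "refl (refl b x) = refl b \<circ> refl x \<circ> refl b"
proof
  fix v
  have o: "orthogonal_transformation (refl b)" by (rule orthogonal_transformation_refl)
  then have lin: "linear (refl b)" by (rule orthogonal_transformation_linear)
  have "refl b v \<bullet> coroot x = v \<bullet> coroot (refl b x)"
    by (metis inner_coroot_orthogonal_transformation[OF o] refl_refl)
  then show "refl (refl b x) v = (refl b \<circ> refl x \<circ> refl b) v"
    using lin by (simp add: refl_def[of x] refl_def[of "refl b x"] linear_diff linear_scale)
qed

lemma refl_word_Nil [simp]: "refl_word [] = id"
  by (simp add: refl_word_def)

lemma refl_word_Cons [simp]: "refl_word (a # as) = refl a \<circ> refl_word as"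
  by (simp add: refl_word_def)

lemma refl_word_append: "refl_word (as @ bs) = refl_word as \<circ> refl_word bs"
  by (induction as) auto

lemma refl_refl_word: "refl (refl_word us a) = refl_word us \<circ> refl a \<circ> refl_word (rev us)"
  by (induction us) (auto simp: refl_refl_conj refl_word_append fun_eq_iff)

lemma refl_word_in_weyl: "set as \<subseteq> R \<Longrightarrow> refl_word as \<in> weyl R"
  by (induction as) (auto intro: weyl.intros)

lemma orthogonal_transformation_weyl: "w \<in> weyl R \<Longrightarrow> orthogonal_transformation w"
proof (induction rule: weyl.induct)
  case (weyl_step w \<alpha>)
  then show ?case using orthogonal_transformation_compose[OF orthogonal_transformation_refl] by blast
qed (simp add: id_def)

subsection \<open>The cone of nonnegative real combinations\<close>

definition nonneg_real_comb :: "'a::euclidean_space set \<Rightarrow> 'a set" where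
  "nonneg_real_comb S = {v. \<exists>c. (\<forall>a\<in>S. c a \<ge> 0) \<and> v = (\<Sum>a\<in>S. c a *\<^sub>R a)}"

lemma nonneg_real_comb_0: "0 \<in> nonneg_real_comb S"
  unfolding nonneg_real_comb_def by (auto intro!: exI[of _ "\<lambda>_. 0"])

lemma nonneg_real_comb_add:
  assumes "x \<in> nonneg_real_comb S" "y \<in> nonneg_real_comb S"
  shows "x + y \<in> nonneg_real_comb S"
proof -
  obtain c d where "\<forall>a\<in>S. c a \<ge> 0" "x = (\<Sum>a\<in>S. c a *\<^sub>R a)"
    "\<forall>a\<in>S. d a \<ge> 0" "y = (\<Sum>a\<in>S. d a *\<^sub>R a)"
    using assms unfolding nonneg_real_comb_def by blast
  then show ?thesis unfolding nonneg_real_comb_def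
    by (auto intro!: exI[of _ "\<lambda>a. c a + d a"] simp: scaleR_add_left sum.distrib)
qed

lemma nonneg_real_comb_scaleR:
  assumes "x \<in> nonneg_real_comb S" "t \<ge> 0"
  shows "t *\<^sub>R x \<in> nonneg_real_comb S"
proof -
  obtain c where "\<forall>a\<in>S. c a \<ge> 0" "x = (\<Sum>a\<in>S. c a *\<^sub>R a)"
    using assms unfolding nonneg_real_comb_def by blast
  then show ?thesis unfolding nonneg_real_comb_def using assms(2)
    by (auto intro!: exI[of _ "\<lambda>a. t * c a"] simp: scaleR_sum_right)
qed

lemma nonneg_real_comb_sum:
  "finite I \<Longrightarrow> (\<And>i. i \<in> I \<Longrightarrow> f i \<in> nonneg_real_comb S) \<Longrightarrow> sum f I \<in> nonneg_real_comb S"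
  by (induction I rule: finite_induct) (auto intro: nonneg_real_comb_0 nonneg_real_comb_add)

lemma nonneg_real_comb_generator:
  assumes "finite S" "a \<in> S"
  shows "a \<in> nonneg_real_comb S"
proof -
  have "a = (\<Sum>b\<in>S. of_int (if b = a then 1 else 0) *\<^sub>R b)"
    using sum_delta_scaleR[OF assms, of 1] by simp
  then show ?thesis unfolding nonneg_real_comb_def
    by (intro CollectI exI[of _ "\<lambda>b. of_int (if b = a then 1 else 0)"]) auto
qed

lemma nonneg_real_comb_pointed:
  assumes "finite S" "independent S" "x \<in> nonneg_real_comb S" "- x \<in> nonneg_real_comb S"
  shows "x = 0"
proof -
  obtain c d where c: "\<forall>a\<in>S. c a \<ge> 0" "x = (\<Sum>a\<in>S. c a *\<^sub>R a)"
    and d: "\<forall>a\<in>S. d a \<ge> 0" "- x = (\<Sum>a\<in>S. d a *\<^sub>R a)"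
    using assms(3,4) unfolding nonneg_real_comb_def by blast
  have "(\<Sum>a\<in>S. (c a + d a) *\<^sub>R a) = 0"
    by (simp add: scaleR_add_left sum.distrib flip: c(2) d(2))
  then have "c a + d a = 0" if "a \<in> S" for a
    using independentD[OF assms(2,1) subset_refl, of "\<lambda>a. c a + d a"] that by blast
  then have "c a = 0" if "a \<in> S" for a
    using c(1) d(1) that by (simp add: add_nonneg_eq_0_iff)
  then show ?thesis using c(2) by simp
qed

lemma nonneg_int_comb_subset_nonneg_real_comb: "nonneg_int_comb S \<subseteq> nonneg_real_comb S"
proof
  fix x assume "x \<in> nonneg_int_comb S"
  then obtain c :: "'a \<Rightarrow> int" where "\<forall>a\<in>S. c a \<ge> 0" "x = (\<Sum>a\<in>S. of_int (c a) *\<^sub>R a)"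
    unfolding nonneg_int_comb_def by blast
  then show "x \<in> nonneg_real_comb S"
    unfolding nonneg_real_comb_def by (intro CollectI exI[of _ "\<lambda>a. of_int (c a)"]) simp
qed

lemma nonneg_int_comb_coroot_subset:
  assumes "0 \<notin> S"
  shows "nonneg_int_comb (coroot ` S) \<subseteq> nonneg_real_comb S"
proof
  fix x assume "x \<in> nonneg_int_comb (coroot ` S)"
  then obtain c :: "'a \<Rightarrow> int" where c: "\<forall>b\<in>coroot ` S. c b \<ge> 0"
    "x = (\<Sum>b\<in>coroot ` S. of_int (c b) *\<^sub>R b)" unfolding nonneg_int_comb_def by auto
  have "inj_on coroot S" using assms by (intro inj_onI) (metis coroot_inject)
  then have "x = (\<Sum>a\<in>S. of_int (c (coroot a)) *\<^sub>R coroot a)"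
    using c(2) by (simp add: sum.reindex o_def)
  also have "\<dots> = (\<Sum>a\<in>S. (of_int (c (coroot a)) * (2 / (a \<bullet> a))) *\<^sub>R a)"
    by (simp add: coroot_def)
  finally show "x \<in> nonneg_real_comb S" unfolding nonneg_real_comb_def using c(1)
    by (auto intro!: exI[of _ "\<lambda>a. of_int (c (coroot a)) * (2 / (a \<bullet> a))"])
qed

lemma nonneg_comb_inner_pos:
  fixes x :: "'a::euclidean_space"
  assumes "x = (\<Sum>b\<in>S. c b *\<^sub>R b)" "\<forall>b\<in>S. c b \<ge> 0" "x \<noteq> 0"
  obtains b where "b \<in> S" "x \<bullet> b > 0"
proof -
  have "0 < x \<bullet> x" using assms(3) by simp
  also have "x \<bullet> x = (\<Sum>b\<in>S. c b * (x \<bullet> b))"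
    by (subst (2) assms(1)) (simp add: inner_sum_right)
  finally have "\<not> (\<forall>b\<in>S. c b * (x \<bullet> b) \<le> 0)"
    using sum_nonpos[of S "\<lambda>b. c b * (x \<bullet> b)"] by fastforce
  then obtain b where "b \<in> S" "c b * (x \<bullet> b) > 0" by (auto simp: not_le)
  then show ?thesis using that assms(2) by (force simp: zero_less_mult_iff)
qed

subsection \<open>Positive roots with respect to a base\<close>

locale based_root_system =
  fixes R S :: "'a::euclidean_space set"
  assumes root_system: "root_system R" and crystallographic: "crystallographic R"
    and reduced: "reduced R" and base: "is_base R S"
begin

abbreviation pos :: "'a set" where "pos \<equiv> pos_roots R S"

lemma finite_roots: "finite R"
  using root_system by (simp add: root_system_def)

lemma zero_notin_roots: "0 \<notin> R"
  using root_system by (simp add: root_system_def)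

lemma refl_root: "\<alpha> \<in> R \<Longrightarrow> \<beta> \<in> R \<Longrightarrow> refl \<alpha> \<beta> \<in> R"
  using root_system by (auto simp: root_system_def)

lemma uminus_root: "\<alpha> \<in> R \<Longrightarrow> - \<alpha> \<in> R"
proof -
  assume "\<alpha> \<in> R"
  moreover from this have "\<alpha> \<noteq> 0" using zero_notin_roots by blast
  ultimately show ?thesis using refl_root[of \<alpha> \<alpha>] refl_self[of \<alpha>] by simp
qed

lemma inner_coroot_Ints: "\<alpha> \<in> R \<Longrightarrow> \<beta> \<in> R \<Longrightarrow> \<beta> \<bullet> coroot \<alpha> \<in> \<int>"
  using crystallographic by (simp add: crystallographic_def)

lemma simple_roots_subset: "S \<subseteq> R"
  using base by (simp add: is_base_def)

lemma finite_simple_roots: "finite S"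
  using simple_roots_subset finite_roots finite_subset by blast

lemma independent_simple_roots: "independent S"
  using base by (simp add: is_base_def)

lemma zero_notin_simple_roots: "0 \<notin> S"
  using simple_roots_subset zero_notin_roots by blast

lemma pos_root: "\<beta> \<in> pos \<Longrightarrow> \<beta> \<in> R"
  by (simp add: pos_roots_def)

lemma pos_root_nonzero: "\<beta> \<in> pos \<Longrightarrow> \<beta> \<noteq> 0"
  using pos_root zero_notin_roots by blast

lemma pos_rootE:
  assumes "\<beta> \<in> pos"
  obtains c :: "'a \<Rightarrow> int" where "\<forall>b\<in>S. c b \<ge> 0" "\<beta> = (\<Sum>b\<in>S. of_int (c b) *\<^sub>R b)"
  using assms unfolding pos_roots_def nonneg_int_comb_def by blast

lemma pos_root_nonneg_real_comb: "\<beta> \<in> pos \<Longrightarrow> \<beta> \<in> nonneg_real_comb S"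
  using nonneg_int_comb_subset_nonneg_real_comb by (auto simp: pos_roots_def)

lemma nonneg_real_comb_pointed': "x \<in> nonneg_real_comb S \<Longrightarrow> - x \<in> nonneg_real_comb S \<Longrightarrow> x = 0"
  using nonneg_real_comb_pointed[OF finite_simple_roots independent_simple_roots] by blast

lemma pos_root_not_neg:
  assumes "\<beta> \<in> pos" shows "- \<beta> \<notin> pos"
proof
  assume "- \<beta> \<in> pos"
  then have "\<beta> = 0"
    using nonneg_real_comb_pointed'[OF pos_root_nonneg_real_comb[OF assms]] pos_root_nonneg_real_comb
    by simp
  then show False using pos_root_nonzero[OF assms] by contradiction
qed

lemma simple_root_pos: "a \<in> S \<Longrightarrow> a \<in> pos"
proof -
  assume a: "a \<in> S"
  then have "a = (\<Sum>b\<in>S. of_int (if b = a then 1 else 0) *\<^sub>R b)"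
    using sum_delta_scaleR[OF finite_simple_roots a, of 1] by simp
  then have "a \<in> nonneg_int_comb S" unfolding nonneg_int_comb_def
    by (intro CollectI exI[of _ "\<lambda>b. if b = a then 1 else 0 :: int"]) simp
  then show ?thesis using a simple_roots_subset unfolding pos_roots_def by blast
qed

lemma root_pos_or_neg: "\<beta> \<in> R \<Longrightarrow> \<beta> \<in> pos \<or> - \<beta> \<in> pos"
proof -
  assume \<beta>: "\<beta> \<in> R"
  then obtain c :: "'a \<Rightarrow> int" where c: "\<beta> = (\<Sum>\<alpha>\<in>S. of_int (c \<alpha>) *\<^sub>R \<alpha>)"
    "(\<forall>\<alpha>\<in>S. c \<alpha> \<ge> 0) \<or> (\<forall>\<alpha>\<in>S. c \<alpha> \<le> 0)"
    using base unfolding is_base_def by blast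
  show ?thesis
  proof (cases "\<forall>\<alpha>\<in>S. c \<alpha> \<ge> 0")
    case True
    then have "\<beta> \<in> nonneg_int_comb S"
      unfolding nonneg_int_comb_def using c(1) by (intro CollectI exI[of _ c]) simp
    then show ?thesis using \<beta> unfolding pos_roots_def by blast
  next
    case False
    then have "\<forall>\<alpha>\<in>S. - c \<alpha> \<ge> 0" using c(2) by auto
    moreover have "- \<beta> = (\<Sum>\<alpha>\<in>S. of_int (- c \<alpha>) *\<^sub>R \<alpha>)"
      using c(1) by (simp add: sum_negf)
    ultimately have "- \<beta> \<in> nonneg_int_comb S"
      unfolding nonneg_int_comb_def by (intro CollectI exI[of _ "\<lambda>\<alpha>. - c \<alpha>"]) simp
    then show ?thesis using uminus_root[OF \<beta>] unfolding pos_roots_def by blast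
  qed
qed

lemma root_nonneg_real_comb_pos:
  assumes "\<beta> \<in> R" "\<beta> \<in> nonneg_real_comb S"
  shows "\<beta> \<in> pos"
proof (rule ccontr)
  assume "\<beta> \<notin> pos"
  then have "- \<beta> \<in> pos" using root_pos_or_neg[OF assms(1)] by blast
  moreover from this have "- \<beta> = 0"
    using nonneg_real_comb_pointed'[of "- \<beta>"] pos_root_nonneg_real_comb assms(2) by simp
  ultimately show False using pos_root_nonzero by blast
qed

lemma pos_root_coeff_nonneg:
  assumes "\<beta> \<in> pos" "\<beta> = (\<Sum>b\<in>S. of_int (c b) *\<^sub>R b)" "b \<in> S"
  shows "c b \<ge> 0"
proof -
  obtain d :: "'a \<Rightarrow> int" where d: "\<forall>b\<in>S. d b \<ge> 0" "\<beta> = (\<Sum>b\<in>S. of_int (d b) *\<^sub>R b)"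
    using assms(1) by (rule pos_rootE)
  have "(of_int (c b) :: real) = of_int (d b)"
    using independent_coefficients_eq[OF independent_simple_roots _ assms(3),
        of "\<lambda>b. of_int (c b)" "\<lambda>b. of_int (d b)"] assms(2) d(2) by simp
  then show ?thesis using d(1) assms(3) by simp
qed

lemma root_pos_of_coeff_pos:
  assumes "\<beta> \<in> R" "\<beta> = (\<Sum>b\<in>S. of_int (c b) *\<^sub>R b)" "b \<in> S" "c b > 0"
  shows "\<beta> \<in> pos"
proof (rule ccontr)
  assume "\<beta> \<notin> pos"
  then have "- \<beta> \<in> pos" using root_pos_or_neg[OF assms(1)] by blast
  moreover have "- \<beta> = (\<Sum>b\<in>S. of_int (- c b) *\<^sub>R b)" using assms(2) by (simp add: sum_negf)
  ultimately have "- c b \<ge> 0" using pos_root_coeff_nonneg[of "- \<beta>" "\<lambda>b. - c b"] assms(3) by blast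
  then show False using assms(4) by simp
qed

lemma simple_refl_coeffs:
  assumes "a \<in> S" "\<beta> = (\<Sum>b\<in>S. of_int (c b) *\<^sub>R b)" "\<beta> \<bullet> coroot a = of_int m"
  shows "refl a \<beta> = (\<Sum>b\<in>S. of_int (c b - (if b = a then m else 0)) *\<^sub>R b)"
proof -
  have "(\<Sum>b\<in>S. of_int (c b - (if b = a then m else 0)) *\<^sub>R b)
      = \<beta> - (\<Sum>b\<in>S. of_int (if b = a then m else 0) *\<^sub>R b)"
    by (simp add: assms(2) scaleR_diff_left sum_subtractf)
  also have "\<dots> = refl a \<beta>"
    using sum_delta_scaleR[OF finite_simple_roots assms(1)] by (simp add: refl_def assms(3))
  finally show ?thesis ..
qed

lemma simple_refl_pos:
  assumes a: "a \<in> S" and \<epsilon>: "\<epsilon> \<in> pos" "\<epsilon> \<noteq> a"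
  shows "refl a \<epsilon> \<in> pos"
proof -
  have aR: "a \<in> R" and \<epsilon>R: "\<epsilon> \<in> R" using a \<epsilon> simple_roots_subset pos_root by auto
  obtain c :: "'a \<Rightarrow> int" where c: "\<forall>b\<in>S. c b \<ge> 0" "\<epsilon> = (\<Sum>b\<in>S. of_int (c b) *\<^sub>R b)"
    using \<epsilon>(1) by (rule pos_rootE)
  obtain m :: int where m: "\<epsilon> \<bullet> coroot a = of_int m"
    using inner_coroot_Ints[OF aR \<epsilon>R] by (rule Ints_cases)
  \<comment> \<open>By reducedness \<epsilon> is no multiple of a, so it has a positive coefficient away from a,
    which the reflection does not change.\<close>
  have "\<exists>b\<in>S. b \<noteq> a \<and> c b > 0"
  proof (rule ccontr)
    assume "\<not> ?thesis"
    then have "\<forall>b\<in>S. b \<noteq> a \<longrightarrow> c b = 0" using c(1) by (auto simp: order.order_iff_strict)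
    then have "\<epsilon> = (\<Sum>b\<in>S. of_int (if b = a then c a else 0) *\<^sub>R b)"
      unfolding c(2) by (intro sum.cong) auto
    then have \<epsilon>_eq: "\<epsilon> = of_int (c a) *\<^sub>R a"
      using sum_delta_scaleR[OF finite_simple_roots a] by simp
    then have "of_int (c a) = (1::real) \<or> of_int (c a) = (-1::real)"
      using reduced aR \<epsilon>R unfolding reduced_def by blast
    then have "c a = 1" using c(1) a by auto
    then show False using \<epsilon>_eq \<epsilon>(2) by simp
  qed
  then obtain b0 where "b0 \<in> S" "b0 \<noteq> a" "c b0 > 0" by blast
  then show ?thesis
    using root_pos_of_coeff_pos[OF refl_root[OF aR \<epsilon>R] simple_refl_coeffs[OF a c(2) m]] by auto
qed

lemma simple_refl_neg:
  assumes "a \<in> S" "- \<epsilon> \<in> pos" "\<epsilon> \<noteq> - a"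
  shows "- refl a \<epsilon> \<in> pos"
proof -
  have "- \<epsilon> \<noteq> a" using assms(3) by auto
  then show ?thesis using simple_refl_pos[OF assms(1,2)] by (simp add: refl_uminus_arg)
qed

lemma weyl_image_roots: "w \<in> weyl R \<Longrightarrow> w ` R = R"
proof (induction rule: weyl.induct)
  case (weyl_step w \<alpha>)
  have "(refl \<alpha> \<circ> w) ` R = refl \<alpha> ` R" by (simp only: image_comp[symmetric] weyl_step.IH)
  then show ?case using root_system weyl_step.hyps(2) by (simp add: root_system_def)
qed simp

lemma weyl_root: "w \<in> weyl R \<Longrightarrow> \<delta> \<in> R \<Longrightarrow> w \<delta> \<in> R"
  using weyl_image_roots by blast

lemma refl_word_simple_in_weyl: "set as \<subseteq> S \<Longrightarrow> refl_word as \<in> weyl R"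
  using refl_word_in_weyl simple_roots_subset by blast

lemma exchange:
  assumes "set as \<subseteq> S" "\<delta> \<in> R" "- \<delta> \<in> pos" "refl_word as \<delta> \<in> pos"
  shows "\<exists>as'. set as' \<subseteq> S \<and> length as' < length as \<and>
    refl (refl_word as \<delta>) \<circ> refl_word as = refl_word as'"
  using assms
proof (induction as)
  case Nil
  then show ?case using pos_root_not_neg by fastforce
next
  case (Cons a bs)
  define \<epsilon> where "\<epsilon> = refl_word bs \<delta>"
  have a: "a \<in> S" and bs: "set bs \<subseteq> S" using Cons.prems(1) by auto
  have \<epsilon>R: "\<epsilon> \<in> R" unfolding \<epsilon>_def using weyl_root[OF refl_word_simple_in_weyl[OF bs] Cons.prems(2)] .
  have image: "refl_word (a # bs) \<delta> = refl a \<epsilon>" by (simp add: \<epsilon>_def)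
  consider "\<epsilon> \<in> pos" | "- \<epsilon> \<in> pos" "\<epsilon> = - a" | "- \<epsilon> \<in> pos" "\<epsilon> \<noteq> - a"
    using root_pos_or_neg[OF \<epsilon>R] by blast
  then show ?case
  proof cases
    case 1
    then obtain bs' where bs': "set bs' \<subseteq> S" "length bs' < length bs"
      "refl \<epsilon> \<circ> refl_word bs = refl_word bs'"
      using Cons.IH[OF bs Cons.prems(2,3)] unfolding \<epsilon>_def by blast
    have "refl (refl_word (a # bs) \<delta>) \<circ> refl_word (a # bs) = refl a \<circ> (refl \<epsilon> \<circ> refl_word bs)"
      unfolding image by (simp add: refl_refl_conj fun_eq_iff)
    also have "\<dots> = refl_word (a # bs')" using bs'(3) by simp
    finally have "refl (refl_word (a # bs) \<delta>) \<circ> refl_word (a # bs) = refl_word (a # bs')" .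
    moreover have "set (a # bs') \<subseteq> S" "length (a # bs') < length (a # bs)" using bs' a by auto
    ultimately show ?thesis by blast
  next
    case 2
    have "a \<noteq> 0" using a zero_notin_simple_roots by blast
    then have "refl_word (a # bs) \<delta> = a" using image 2(2) by (simp add: refl_uminus_arg refl_self)
    then have "refl (refl_word (a # bs) \<delta>) \<circ> refl_word (a # bs) = refl_word bs"
      by (simp add: fun_eq_iff)
    moreover have "length bs < length (a # bs)" by simp
    ultimately show ?thesis using bs by blast
  next
    case 3
    then have "- refl_word (a # bs) \<delta> \<in> pos" using simple_refl_neg[OF a] image by simp
    then show ?thesis using pos_root_not_neg Cons.prems(4) by blast
  qed
qed

text \<open>Induction on the height, which the reflection in a simple root pairing positively with
  \<beta> lowers.\<close>

lemma pos_root_conj_simple: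
  assumes "\<beta> \<in> pos"
  shows "\<exists>us a. set us \<subseteq> S \<and> a \<in> S \<and> \<beta> = refl_word us a"
proof -
  obtain c :: "'a \<Rightarrow> int" where "\<forall>b\<in>S. c b \<ge> 0" "\<beta> = (\<Sum>b\<in>S. of_int (c b) *\<^sub>R b)"
    using assms by (rule pos_rootE)
  with assms show ?thesis
  proof (induction "nat (\<Sum>b\<in>S. c b)" arbitrary: \<beta> c rule: less_induct)
    case less
    show ?case
    proof (cases "\<beta> \<in> S")
      case True
      then show ?thesis by (intro exI[of _ "[]"] exI[of _ \<beta>]) simp
    next
      case False
      have \<beta>R: "\<beta> \<in> R" using less.prems(1) pos_root by blast
      obtain a where a: "a \<in> S" "\<beta> \<bullet> a > 0"
        using nonneg_comb_inner_pos[OF less.prems(3)] less.prems(2) pos_root_nonzero[OF less.prems(1)]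
        by auto
      have aR: "a \<in> R" using a(1) simple_roots_subset by blast
      obtain m :: int where m: "\<beta> \<bullet> coroot a = of_int m"
        using inner_coroot_Ints[OF aR \<beta>R] by (rule Ints_cases)
      have "m > 0"
        using a m inner_coroot_pos_iff[of a \<beta>] zero_notin_simple_roots by auto
      define c' where "c' b = c b - (if b = a then m else 0)" for b
      have refl_\<beta>: "refl a \<beta> = (\<Sum>b\<in>S. of_int (c' b) *\<^sub>R b)"
        unfolding c'_def by (rule simple_refl_coeffs[OF a(1) less.prems(3) m])
      have refl_pos: "refl a \<beta> \<in> pos" using simple_refl_pos[OF a(1) less.prems(1)] False a(1) by blast
      have c'_nonneg: "\<forall>b\<in>S. c' b \<ge> 0" using pos_root_coeff_nonneg[OF refl_pos refl_\<beta>] by blast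
      have "(\<Sum>b\<in>S. c' b) = (\<Sum>b\<in>S. c b) - m"
        unfolding c'_def using a(1) finite_simple_roots by (simp add: sum_subtractf sum.delta)
      moreover have "(\<Sum>b\<in>S. c' b) \<ge> 0" using c'_nonneg by (simp add: sum_nonneg)
      ultimately have "nat (\<Sum>b\<in>S. c' b) < nat (\<Sum>b\<in>S. c b)" using \<open>m > 0\<close> by linarith
      then obtain us a' where "set us \<subseteq> S" "a' \<in> S" "refl a \<beta> = refl_word us a'"
        using less.hyps[OF _ refl_pos c'_nonneg refl_\<beta>] by blast
      moreover have "\<beta> = refl a (refl a \<beta>)" by simp
      ultimately show ?thesis using a(1) by (intro exI[of _ "a # us"] exI[of _ a']) auto
    qed
  qed
qed

lemma refl_eq_refl_word: "\<alpha> \<in> R \<Longrightarrow> \<exists>bs. set bs \<subseteq> S \<and> refl \<alpha> = refl_word bs"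
proof -
  assume "\<alpha> \<in> R"
  then obtain \<beta> where \<beta>: "\<beta> \<in> pos" "refl \<alpha> = refl \<beta>"
    using root_pos_or_neg[OF \<open>\<alpha> \<in> R\<close>] refl_uminus[of \<alpha>] by metis
  obtain us a where "set us \<subseteq> S" "a \<in> S" "\<beta> = refl_word us a"
    using pos_root_conj_simple[OF \<beta>(1)] by blast
  with \<beta>(2) show ?thesis
    by (intro exI[of _ "us @ a # rev us"]) (simp add: refl_refl_word refl_word_append o_assoc)
qed

lemma weyl_eq_refl_word: "w \<in> weyl R \<Longrightarrow> \<exists>as. set as \<subseteq> S \<and> w = refl_word as"
proof (induction rule: weyl.induct)
  case weyl_id
  then show ?case by (intro exI[of _ "[]"]) simp
next
  case (weyl_step w \<alpha>)
  then obtain as bs where "set as \<subseteq> S" "w = refl_word as" "set bs \<subseteq> S" "refl \<alpha> = refl_word bs"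
    using refl_eq_refl_word by blast
  then show ?case by (intro exI[of _ "bs @ as"]) (simp add: refl_word_append)
qed

lemma weyl_length_word:
  assumes "w \<in> weyl R"
  obtains as where "set as \<subseteq> S" "length as = weyl_length S w" "w = refl_word as"
proof -
  have "\<exists>k as. set as \<subseteq> S \<and> length as = k \<and> w = refl_word as"
    using weyl_eq_refl_word[OF assms] by blast
  then have "\<exists>as. set as \<subseteq> S \<and> length as = weyl_length S w \<and> w = refl_word as"
    unfolding weyl_length_def by (rule LeastI_ex)
  then show ?thesis using that by blast
qed

lemma weyl_length_le: "set as \<subseteq> S \<Longrightarrow> weyl_length S (refl_word as) \<le> length as"
  unfolding weyl_length_def by (rule Least_le) blast

lemma inner_coroot_pos_root_nonneg:
  assumes "\<forall>a\<in>S. x \<bullet> coroot a \<ge> 0" "\<beta> \<in> pos"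
  shows "x \<bullet> coroot \<beta> \<ge> 0"
proof -
  obtain c :: "'a \<Rightarrow> int" where c: "\<forall>b\<in>S. c b \<ge> 0" "\<beta> = (\<Sum>b\<in>S. of_int (c b) *\<^sub>R b)"
    using assms(2) by (rule pos_rootE)
  have "x \<bullet> a \<ge> 0" if "a \<in> S" for a
  proof -
    have "a \<noteq> 0" using that zero_notin_simple_roots by blast
    then show ?thesis using inner_coroot_nonneg_iff[of a x] assms(1) that by simp
  qed
  then have "x \<bullet> \<beta> \<ge> 0"
    unfolding c(2) inner_sum_right using c(1) by (simp add: sum_nonneg)
  then show ?thesis by (simp add: inner_coroot_nonneg_iff[OF pos_root_nonzero[OF assms(2)]])
qed

lemma dominant_iff_simple:
  assumes "x \<in> weights R"
  shows "x \<in> dominant R S \<longleftrightarrow> (\<forall>a\<in>S. x \<bullet> coroot a \<ge> 0)"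
proof
  assume "x \<in> dominant R S"
  then show "\<forall>a\<in>S. x \<bullet> coroot a \<ge> 0" using simple_root_pos by (simp add: dominant_def)
next
  assume "\<forall>a\<in>S. x \<bullet> coroot a \<ge> 0"
  then show "x \<in> dominant R S"
    using assms inner_coroot_pos_root_nonneg by (simp add: dominant_def)
qed

lemma root_weight: "\<alpha> \<in> R \<Longrightarrow> \<alpha> \<in> weights R"
  using inner_coroot_Ints by (simp add: weights_def)

lemma weights_add: "x \<in> weights R \<Longrightarrow> y \<in> weights R \<Longrightarrow> x + y \<in> weights R"
  by (auto simp: weights_def inner_add_left)

lemma weyl_weight:
  assumes "w \<in> weyl R" "x \<in> weights R"
  shows "w x \<in> weights R"
  unfolding weights_def
proof (intro CollectI ballI)
  fix \<beta> assume "\<beta> \<in> R"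
  then obtain \<delta> where "\<delta> \<in> R" "\<beta> = w \<delta>" using weyl_image_roots[OF assms(1)] by blast
  then show "w x \<bullet> coroot \<beta> \<in> \<int>"
    using assms(2) inner_coroot_orthogonal_transformation[OF orthogonal_transformation_weyl[OF assms(1)]]
    by (simp add: weights_def)
qed

lemma alpha0_pos: "is_alpha0 R S \<alpha>0 \<Longrightarrow> \<alpha>0 \<in> pos"
  by (simp add: is_alpha0_def)

lemma alpha0_coroot_diff:
  "is_alpha0 R S \<alpha>0 \<Longrightarrow> \<beta> \<in> R \<Longrightarrow> coroot \<alpha>0 - coroot \<beta> \<in> nonneg_real_comb S"
  using nonneg_int_comb_coroot_subset[OF zero_notin_simple_roots] by (auto simp: is_alpha0_def)

lemma alpha0_inner_coroot_simple:
  assumes \<alpha>0: "is_alpha0 R S \<alpha>0" and a: "a \<in> S"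
  shows "\<alpha>0 \<bullet> coroot a \<ge> 0"
proof (rule ccontr)
  assume neg: "\<not> \<alpha>0 \<bullet> coroot a \<ge> 0"
  have aR: "a \<in> R" and "a \<noteq> 0" using a simple_roots_subset zero_notin_simple_roots by auto
  have \<alpha>0R: "\<alpha>0 \<in> R" "\<alpha>0 \<noteq> 0" using alpha0_pos[OF \<alpha>0] pos_root pos_root_nonzero by auto
  define t where "t = coroot \<alpha>0 \<bullet> coroot a"
  have "coroot (refl a \<alpha>0) = refl a (coroot \<alpha>0)"
    by (rule coroot_orthogonal_transformation[OF orthogonal_transformation_refl])
  then have "t *\<^sub>R a = coroot \<alpha>0 - coroot (refl a \<alpha>0)"
    by (simp add: refl_def t_def)
  then have "t *\<^sub>R a \<in> nonneg_real_comb S"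
    using alpha0_coroot_diff[OF \<alpha>0 refl_root[OF aR \<alpha>0R(1)]] by simp
  moreover have "t < 0"
    using neg \<alpha>0R(2) by (simp add: t_def coroot_def[of \<alpha>0] divide_neg_pos)
  then have "- (t *\<^sub>R a) \<in> nonneg_real_comb S"
    using nonneg_real_comb_scaleR[OF nonneg_real_comb_generator[OF finite_simple_roots a], of "- t"]
    by simp
  ultimately have "t *\<^sub>R a = 0" by (rule nonneg_real_comb_pointed')
  then show False using \<open>t < 0\<close> \<open>a \<noteq> 0\<close> by simp
qed

lemma alpha0_dominant: "is_alpha0 R S \<alpha>0 \<Longrightarrow> \<delta> \<in> pos \<Longrightarrow> \<alpha>0 \<bullet> coroot \<delta> \<ge> 0"
  using inner_coroot_pos_root_nonneg alpha0_inner_coroot_simple by blast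

text \<open>The highest coroot forces both coroot \<alpha>0 - coroot \<gamma> and the corresponding
  difference for the root - refl \<alpha>0 \<gamma> into the cone; their sum is (2 - k) times
  coroot \<alpha>0 with k \<ge> 2, so both vanish.\<close>

lemma alpha0_pairing_ge_2:
  assumes \<alpha>0: "is_alpha0 R S \<alpha>0" and \<gamma>: "\<gamma> \<in> pos" and k: "\<alpha>0 \<bullet> coroot \<gamma> \<ge> 2"
  shows "\<gamma> = \<alpha>0"
proof -
  have \<alpha>0R: "\<alpha>0 \<in> R" "\<alpha>0 \<noteq> 0" using alpha0_pos[OF \<alpha>0] pos_root pos_root_nonzero by auto
  have \<gamma>R: "\<gamma> \<in> R" "\<gamma> \<noteq> 0" using \<gamma> pos_root pos_root_nonzero by auto
  define k where "k = \<alpha>0 \<bullet> coroot \<gamma>"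
  define u where "u = coroot \<alpha>0 - coroot \<gamma>"
  define v where "v = coroot \<alpha>0 + coroot \<gamma> - k *\<^sub>R coroot \<alpha>0"
  have u: "u \<in> nonneg_real_comb S" unfolding u_def by (rule alpha0_coroot_diff[OF \<alpha>0 \<gamma>R(1)])
  have "refl \<alpha>0 (coroot \<gamma>) = coroot \<gamma> - k *\<^sub>R coroot \<alpha>0"
    using \<alpha>0R(2) by (simp add: refl_def k_def coroot_def[of \<alpha>0] inner_commute)
  then have "v = coroot \<alpha>0 - coroot (- refl \<alpha>0 \<gamma>)"
    by (simp add: v_def coroot_orthogonal_transformation[OF orthogonal_transformation_refl])
  then have v: "v \<in> nonneg_real_comb S"
    using alpha0_coroot_diff[OF \<alpha>0 uminus_root[OF refl_root[OF \<alpha>0R(1) \<gamma>R(1)]]] by simp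
  have "coroot \<alpha>0 \<in> nonneg_real_comb S"
    unfolding coroot_def using \<alpha>0R(2) pos_root_nonneg_real_comb[OF alpha0_pos[OF \<alpha>0]]
    by (intro nonneg_real_comb_scaleR) simp_all
  then have "- (u + v) \<in> nonneg_real_comb S"
    using nonneg_real_comb_scaleR[of "coroot \<alpha>0" S "k - 2"] k
    by (simp add: u_def v_def k_def algebra_simps scaleR_2)
  then have "u + v = 0" using nonneg_real_comb_pointed' nonneg_real_comb_add[OF u v] by blast
  then have "- u \<in> nonneg_real_comb S" using v by (simp add: add_eq_0_iff2)
  then have "u = 0" using nonneg_real_comb_pointed'[OF u] by blast
  then show ?thesis using coroot_inject[OF \<gamma>R(2) \<alpha>0R(2)] by (simp add: u_def)
qed

lemma dominant_add_neg_root: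
  assumes "\<nu> + x \<in> dominant R S" "x \<in> neg_roots R S"
  shows "\<nu> \<bullet> coroot x \<le> -2"
proof -
  obtain \<theta> where \<theta>: "\<theta> \<in> pos" "x = - \<theta>" using assms(2) unfolding neg_roots_def by blast
  then have "(\<nu> - \<theta>) \<bullet> coroot \<theta> \<ge> 0" using assms(1) by (simp add: dominant_def)
  then show ?thesis
    using \<theta> inner_coroot_self[OF pos_root_nonzero[OF \<theta>(1)]] by (simp add: inner_diff_left)
qed

end

subsection \<open>The shortest Weyl group element making a weight dominant\<close>

locale minimal_dominating = based_root_system +
  fixes \<mu> :: 'a and w :: "'a \<Rightarrow> 'a"
  assumes is_w_mu: "is_w_mu R S \<mu> w"
begin

lemma w_weyl: "w \<in> weyl R"
  using is_w_mu by (simp add: is_w_mu_def)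

lemma orthogonal_transformation_w: "orthogonal_transformation w"
  using orthogonal_transformation_weyl[OF w_weyl] .

lemma dominant_w_mu: "w \<mu> \<in> dominant R S"
  using is_w_mu by (simp add: is_w_mu_def)

lemma w_mu_weight: "w \<mu> \<in> weights R"
  using dominant_w_mu by (simp add: dominant_def)

lemma w_mu_pairing_nonneg: "\<beta> \<in> pos \<Longrightarrow> w \<mu> \<bullet> coroot \<beta> \<ge> 0"
  using dominant_w_mu by (simp add: dominant_def)

lemma w_uminus: "w (- x) = - w x"
  using orthogonal_transformation_w by (simp add: orthogonal_transformation_def linear_neg)

lemma inner_coroot_w: "w x \<bullet> coroot (w y) = x \<bullet> coroot y"
  by (rule inner_coroot_orthogonal_transformation[OF orthogonal_transformation_w])

lemma inv_w_root:
  assumes "\<beta> \<in> R"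
  shows "inv w \<beta> \<in> R" and "w (inv w \<beta>) = \<beta>"
proof -
  obtain \<delta> where "\<delta> \<in> R" "\<beta> = w \<delta>" using weyl_image_roots[OF w_weyl] assms by blast
  moreover have "inv w (w \<delta>) = \<delta>"
    using inv_f_f[OF orthogonal_transformation_inj[OF orthogonal_transformation_w]] .
  ultimately show "inv w \<beta> \<in> R" "w (inv w \<beta>) = \<beta>" by simp_all
qed

text \<open>A simple root orthogonal to w \<mu> is not inverted by w: otherwise the exchange property
  shortens refl a \<circ> w, which still sends \<mu> to w \<mu>.\<close>

lemma simple_stabilizer_pos:
  assumes a: "a \<in> S" and orth: "w \<mu> \<bullet> coroot a = 0"
  shows "inv w a \<in> pos"
proof (rule ccontr)
  define \<delta> where "\<delta> = inv w a"
  assume "inv w a \<notin> pos"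
  have aR: "a \<in> R" using a simple_roots_subset by blast
  have \<delta>: "\<delta> \<in> R" "w \<delta> = a" "\<delta> \<notin> pos"
    using inv_w_root[OF aR] \<open>inv w a \<notin> pos\<close> by (simp_all add: \<delta>_def)
  then have "- \<delta> \<in> pos" using root_pos_or_neg[OF \<delta>(1)] by simp
  obtain as where as: "set as \<subseteq> S" "length as = weyl_length S w" "w = refl_word as"
    using weyl_length_word[OF w_weyl] by blast
  have "refl_word as \<delta> = a" using as(3) \<delta>(2) by simp
  then obtain as' where as': "set as' \<subseteq> S" "length as' < length as" "refl a \<circ> w = refl_word as'"
    using exchange[OF as(1) \<delta>(1) \<open>- \<delta> \<in> pos\<close>] simple_root_pos[OF a] as(3) by auto
  have "(refl a \<circ> w) \<mu> = w \<mu>" using orth by (simp add: refl_def)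
  then have "(refl a \<circ> w) \<mu> \<in> dominant R S" using dominant_w_mu by simp
  then have "weyl_length S w \<le> weyl_length S (refl a \<circ> w)"
    using is_w_mu weyl.weyl_step[OF w_weyl aR] unfolding is_w_mu_def by blast
  also have "\<dots> \<le> length as'" using weyl_length_le[OF as'(1)] as'(3) by simp
  finally show False using as'(2) as(2) by simp
qed

lemma stabilizer_pos:
  assumes \<beta>: "\<beta> \<in> pos" and orth: "w \<mu> \<bullet> coroot \<beta> = 0"
  shows "inv w \<beta> \<in> pos"
proof -
  obtain c :: "'a \<Rightarrow> int" where c: "\<forall>b\<in>S. c b \<ge> 0" "\<beta> = (\<Sum>b\<in>S. of_int (c b) *\<^sub>R b)"
    using \<beta> by (rule pos_rootE)
  have terms_nonneg: "of_int (c b) * (w \<mu> \<bullet> b) \<ge> 0" if "b \<in> S" for b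
  proof -
    have "b \<noteq> 0" using that zero_notin_simple_roots by blast
    then have "w \<mu> \<bullet> b \<ge> 0"
      using w_mu_pairing_nonneg[OF simple_root_pos[OF that]] inner_coroot_nonneg_iff[of b "w \<mu>"] by simp
    then show ?thesis using c(1) that by simp
  qed
  have "(\<Sum>b\<in>S. of_int (c b) * (w \<mu> \<bullet> b)) = w \<mu> \<bullet> \<beta>"
    by (simp add: c(2) inner_sum_right)
  also have "\<dots> = 0" using orth inner_coroot_eq_0_iff[OF pos_root_nonzero[OF \<beta>]] by simp
  finally have "\<forall>b\<in>S. of_int (c b) * (w \<mu> \<bullet> b) = 0"
    using sum_nonneg_eq_0_iff[OF finite_simple_roots, of "\<lambda>b. of_int (c b) * (w \<mu> \<bullet> b)"]
      terms_nonneg by simp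
  have "of_int (c b) *\<^sub>R inv w b \<in> nonneg_real_comb S" if b: "b \<in> S" for b
  proof (cases "c b = 0")
    case False
    then have "w \<mu> \<bullet> b = 0" using \<open>\<forall>b\<in>S. of_int (c b) * (w \<mu> \<bullet> b) = 0\<close> b by auto
    moreover have "b \<noteq> 0" using b zero_notin_simple_roots by blast
    ultimately have "w \<mu> \<bullet> coroot b = 0" by (simp add: inner_coroot_eq_0_iff)
    then have "inv w b \<in> nonneg_real_comb S"
      by (rule pos_root_nonneg_real_comb[OF simple_stabilizer_pos[OF b]])
    then show ?thesis using c(1) b by (simp add: nonneg_real_comb_scaleR)
  qed (simp add: nonneg_real_comb_0)
  then have "(\<Sum>b\<in>S. of_int (c b) *\<^sub>R inv w b) \<in> nonneg_real_comb S"
    by (rule nonneg_real_comb_sum[OF finite_simple_roots])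
  moreover have "inv w \<beta> = (\<Sum>b\<in>S. of_int (c b) *\<^sub>R inv w b)"
    using orthogonal_transformation_linear[OF orthogonal_transformation_inv[OF orthogonal_transformation_w]]
    by (simp add: c(2) linear_sum linear_scale)
  ultimately show ?thesis
    using root_nonneg_real_comb_pos[OF inv_w_root(1)[OF pos_root[OF \<beta>]]] by simp
qed

lemma pairing_ge_1_if_inverted:
  assumes \<beta>: "\<beta> \<in> pos" and "inv w \<beta> \<notin> pos"
  shows "w \<mu> \<bullet> coroot \<beta> \<ge> 1"
proof -
  have "w \<mu> \<bullet> coroot \<beta> \<in> \<int>" using w_mu_weight pos_root[OF \<beta>] by (simp add: weights_def)
  moreover have "w \<mu> \<bullet> coroot \<beta> \<noteq> 0" using stabilizer_pos[OF \<beta>] assms(2) by blast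
  then have "0 < w \<mu> \<bullet> coroot \<beta>" using w_mu_pairing_nonneg[OF \<beta>] by simp
  ultimately show ?thesis using Ints_less_imp_add_one_le[OF Ints_0] by simp
qed

lemma neg_pairing_add_alpha0:
  assumes \<alpha>0: "is_alpha0 R S \<alpha>0" and \<beta>: "\<beta> \<in> pos" and neg: "(w \<mu> + w \<alpha>0) \<bullet> coroot \<beta> < 0"
  shows "\<beta> = - w \<alpha>0" and "w \<mu> \<bullet> coroot \<beta> = 1"
proof -
  have \<beta>R: "\<beta> \<in> R" using pos_root[OF \<beta>] .
  define \<delta> where "\<delta> = inv w \<beta>"
  have \<delta>: "\<delta> \<in> R" "w \<delta> = \<beta>" using inv_w_root[OF \<beta>R] by (simp_all add: \<delta>_def)
  have sum: "w \<mu> \<bullet> coroot \<beta> + \<alpha>0 \<bullet> coroot \<delta> < 0"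
    using neg inner_coroot_w[of \<alpha>0 \<delta>] \<delta>(2) by (simp add: inner_add_left)
  have "\<delta> \<notin> pos" using sum alpha0_dominant[OF \<alpha>0] w_mu_pairing_nonneg[OF \<beta>] by fastforce
  then have ge_1: "w \<mu> \<bullet> coroot \<beta> \<ge> 1" using pairing_ge_1_if_inverted[OF \<beta>] \<delta>_def by simp
  have "- \<delta> \<in> pos" using root_pos_or_neg[OF \<delta>(1)] \<open>\<delta> \<notin> pos\<close> by simp
  have "\<alpha>0 \<bullet> coroot (- \<delta>) \<in> \<int>"
    using inner_coroot_Ints[OF uminus_root[OF \<delta>(1)] pos_root[OF alpha0_pos[OF \<alpha>0]]] .
  moreover have "1 < \<alpha>0 \<bullet> coroot (- \<delta>)" using sum ge_1 by simp
  ultimately have "\<alpha>0 \<bullet> coroot (- \<delta>) \<ge> 2" using Ints_less_imp_add_one_le[OF Ints_1] by fastforce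
  then have "- \<delta> = \<alpha>0" by (rule alpha0_pairing_ge_2[OF \<alpha>0 \<open>- \<delta> \<in> pos\<close>])
  then show "\<beta> = - w \<alpha>0" using \<delta>(2) w_uminus by force
  have "\<alpha>0 \<bullet> coroot \<delta> = -2"
    using \<open>- \<delta> = \<alpha>0\<close> inner_coroot_self[OF pos_root_nonzero[OF \<open>- \<delta> \<in> pos\<close>]] by force
  then have "w \<mu> \<bullet> coroot \<beta> < 2" using sum by simp
  moreover have "w \<mu> \<bullet> coroot \<beta> \<in> \<int>" using w_mu_weight \<beta>R by (simp add: weights_def)
  ultimately show "w \<mu> \<bullet> coroot \<beta> = 1"
    using ge_1 Ints_less_imp_add_one_le[of "w \<mu> \<bullet> coroot \<beta>" 2] by simp
qed

lemma dominant_add_minuscule: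
  assumes "minuscule R S \<omega>"
  shows "w \<mu> + w \<omega> \<in> dominant R S"
proof -
  have \<omega>: "\<omega> \<in> dominant R S" using assms by (simp add: minuscule_def)
  then have "w \<omega> \<in> weights R" using weyl_weight[OF w_weyl] by (simp add: dominant_def)
  then have weight: "w \<mu> + w \<omega> \<in> weights R" using weights_add w_mu_weight by blast
  have "(w \<mu> + w \<omega>) \<bullet> coroot \<beta> \<ge> 0" if \<beta>: "\<beta> \<in> pos" for \<beta>
  proof -
    define \<delta> where "\<delta> = inv w \<beta>"
    have \<delta>: "\<delta> \<in> R" "w \<delta> = \<beta>" using inv_w_root[OF pos_root[OF \<beta>]] by (simp_all add: \<delta>_def)
    have "(w \<mu> + w \<omega>) \<bullet> coroot \<beta> = w \<mu> \<bullet> coroot \<beta> + \<omega> \<bullet> coroot \<delta>"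
      using inner_coroot_w[of \<omega> \<delta>] \<delta>(2) by (simp add: inner_add_left)
    moreover consider "\<delta> \<in> pos" | "- \<delta> \<in> pos" "\<delta> \<notin> pos" using root_pos_or_neg[OF \<delta>(1)] by blast
    then have "w \<mu> \<bullet> coroot \<beta> + \<omega> \<bullet> coroot \<delta> \<ge> 0"
    proof cases
      case 1
      then show ?thesis using \<omega> w_mu_pairing_nonneg[OF \<beta>] by (simp add: dominant_def)
    next
      case 2
      have "\<omega> \<bullet> coroot (- \<delta>) \<in> {0, 1}" using assms 2(1) unfolding minuscule_def by blast
      moreover have "w \<mu> \<bullet> coroot \<beta> \<ge> 1" using pairing_ge_1_if_inverted[OF \<beta>] 2(2) \<delta>_def by simp
      ultimately show ?thesis by auto
    qed
    ultimately show ?thesis by simp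
  qed
  then show ?thesis using weight by (simp add: dominant_def)
qed

lemma not_dominant_add_alpha0:
  assumes \<alpha>0: "is_alpha0 R S \<alpha>0" and "w \<mu> + w \<alpha>0 \<notin> dominant R S"
  shows "\<exists>\<alpha>j\<in>S. w \<alpha>0 = - \<alpha>j \<and> w \<mu> \<bullet> coroot \<alpha>j = 1"
proof -
  have "w \<alpha>0 \<in> weights R"
    using weyl_weight[OF w_weyl root_weight[OF pos_root[OF alpha0_pos[OF \<alpha>0]]]] .
  then have "w \<mu> + w \<alpha>0 \<in> weights R" using weights_add w_mu_weight by blast
  then obtain a where a: "a \<in> S" "(w \<mu> + w \<alpha>0) \<bullet> coroot a < 0"
    using dominant_iff_simple assms(2) by (auto simp: not_le)
  moreover have "w \<alpha>0 = - a" "w \<mu> \<bullet> coroot a = 1"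
    using neg_pairing_add_alpha0[OF \<alpha>0 simple_root_pos[OF a(1)] a(2)] by simp_all
  ultimately show ?thesis by blast
qed

end

theorem mainTheorem20:
  fixes R S :: "'a::euclidean_space set" and \<alpha>0 \<mu> :: 'a and w :: "'a \<Rightarrow> 'a"
  assumes "root_system R" and "crystallographic R" and "reduced R" and "irreducible_rs R"
    and "is_base R S" and "is_alpha0 R S \<alpha>0"
    and "\<mu> \<in> weights R" and "is_w_mu R S \<mu> w"
  shows "(\<forall>\<omega>. minuscule R S \<omega> \<longrightarrow> w \<mu> + w \<omega> \<in> dominant R S)
    \<and> (w \<mu> + w \<alpha>0 \<notin> dominant R S \<longrightarrow>
         (\<exists>\<alpha>j\<in>S. w \<alpha>0 = - \<alpha>j \<and> w \<mu> \<bullet> coroot \<alpha>j = 1))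
    \<and> (w \<mu> + w \<alpha>0 \<in> dominant R S \<and> w \<alpha>0 \<in> neg_roots R S \<longrightarrow>
         w \<mu> \<bullet> coroot (w \<alpha>0) \<le> -2)"
proof -
  interpret minimal_dominating R S \<mu> w
    using assms(1-3,5,8) by unfold_locales
  show ?thesis
    using dominant_add_minuscule not_dominant_add_alpha0[OF assms(6)] dominant_add_neg_root
    by blast
qed

end
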